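(* Let $H$ be an even graph (every vertex of even degree) properly embedded in an oriented surface, with edge weights $K_{xy}$ (and fixed square roots $\sqrt{K_{xy}}$). Then \[ \prod_{xy\in E(H)}K_{xy}=\sum_{(M_v)_{v\in V(H)}}\ \prod_{v\in V(H)}(-1)^{\mathrm{cr}(M_v)}\prod_{\{xv,vz\}\in M_v}\sqrt{K_{xv}K_{vz}}, \] where the sum is over all families $(M_v)_{v}$ in which each $M_v$ is a perfect matching of the complete graph $\iota(v,H)$ whose vertex set is the set of edges of $H$ incident to $v$.
   Context: For a perfect matching $M_v$ of $\iota(v,H)$, $\mathrm{cr}(M_v)$ is the number of pairs of matched pairs $\{e_1,e_2\},\{h_1,h_2\}\in M_v$ that cross at $v$, i.e. satisfy $e_1<h_1<e_2<h_2$ in the cyclic order of edges around $v$ induced by the orientation of the surface. *)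

theory Defs
  imports "HOL-Library.FuncSet"
begin

definition simple_graph :: "'v set \<Rightarrow> 'v set set \<Rightarrow> bool" where
  "simple_graph V E \<longleftrightarrow> finite V \<and>
     (\<forall>e\<in>E. \<exists>x y. x \<in> V \<and> y \<in> V \<and> x \<noteq> y \<and> e = {x, y})"

definition incident :: "'v set set \<Rightarrow> 'v \<Rightarrow> 'v set set" where
  "incident E v = {e \<in> E. v \<in> e}"

definition even_graph :: "'v set \<Rightarrow> 'v set set \<Rightarrow> bool" where
  "even_graph V E \<longleftrightarrow> (\<forall>v\<in>V. even (card (incident E v)))"

text \<open>Rotation system: at each vertex a list enumerating the incident edges, read
  cyclically (the cyclic order induced by the orientation of the surface).\<close>
definition rotation_system :: "'v set \<Rightarrow> 'v set set \<Rightarrow> ('v \<Rightarrow> 'v set list) \<Rightarrow> bool" where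
  "rotation_system V E rot \<longleftrightarrow>
     (\<forall>v\<in>V. distinct (rot v) \<and> set (rot v) = incident E v)"

definition perfect_matchings :: "'a set \<Rightarrow> 'a set set set" where
  "perfect_matchings S = {M. (\<forall>p\<in>M. \<exists>a b. a \<in> S \<and> b \<in> S \<and> a \<noteq> b \<and> p = {a, b})
      \<and> (\<forall>p\<in>M. \<forall>q\<in>M. p \<noteq> q \<longrightarrow> p \<inter> q = {}) \<and> \<Union>M = S}"

text \<open>Two matched pairs p, q cross w.r.t. the cyclic order given by xs:
  p = {e1,e2}, q = {h1,h2} with e1 < h1 < e2 < h2 (up to rotation, which is
  equivalent to this linear condition with the roles of p and q possibly swapped).\<close>
definition crosses :: "'a list \<Rightarrow> 'a set \<Rightarrow> 'a set \<Rightarrow> bool" where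
  "crosses xs p q \<longleftrightarrow> (\<exists>i j k l. i < j \<and> j < k \<and> k < l \<and> l < length xs \<and>
      p = {xs ! i, xs ! k} \<and> q = {xs ! j, xs ! l})"

definition cr :: "'a list \<Rightarrow> 'a set set \<Rightarrow> nat" where
  "cr xs M = card {{p, q} | p q. p \<in> M \<and> q \<in> M \<and> crosses xs p q}"

end

theory Submission
  imports Defs
begin

(* Both sides factor over the vertices.  Expanding the product of
   per-vertex sums (prod_sum_PiE), the right-hand side equals
   \<Prod>v. \<Sum>M. (-1)^cr(M) \<Prod>p\<in>M. \<Prod>e\<in>p. sqrtK e.  For every perfect matching M of
   the edges at v the weight \<Prod>p\<in>M. \<Prod>e\<in>p. sqrtK e is simply \<Prod>e at v. sqrtK e,
   so the vertex factor is (\<Sum>M. (-1)^cr(M)) * \<Prod>e at v. sqrtK e.  The core of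
   the proof is the purely combinatorial identity

        \<Sum> over perfect matchings M of 2n points on a circle of (-1)^cr(M) = 1,

   proved by induction: match the first point x with some y; the crossings
   created by the pair {x,y} have the parity of the number of points strictly
   between x and y, and the resulting alternating sum over y is 1.  We phrase it
   for points ranked by an injective map r into nat and transfer it to the
   list-based crossing count cr.  Finally every edge has exactly two endpoints,
   so \<Prod>v \<Prod>e at v. sqrtK e = \<Prod>e. sqrtK e ^ 2 = \<Prod>e. K e. *)

lemma alternating_rank_sum:
  assumes "finite T" "inj_on (r :: 'a \<Rightarrow> nat) T"
  shows "(\<Sum>y\<in>T. (-1::'b::comm_ring_1) ^ card {z\<in>T. r z < r y}) = (if even (card T) then 0 else 1)"
  using assms
proof (induction "card T" arbitrary: T rule: less_induct)
  case less
  show ?case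
  proof (cases "T = {}")
    case False
    obtain m where m: "m \<in> T" "r m = Max (r ` T)"
      using False less.prems by (metis (mono_tags, lifting) Max_in finite_imageI image_iff image_is_empty)
    have top: "r z < r m" if "z \<in> T - {m}" for z
    proof -
      have "r z \<le> r m" using that m less.prems(1) by simp
      moreover have "r z \<noteq> r m" using that m(1) less.prems(2) by (auto dest: inj_onD)
      ultimately show ?thesis by simp
    qed
    let ?T = "T - {m}"
    have IH: "(\<Sum>y\<in>?T. (-1::'b) ^ card {z\<in>?T. r z < r y}) = (if even (card ?T) then 0 else 1)"
      using less.hyps[OF card_Diff1_less[OF less.prems(1) m(1)]] less.prems by (simp add: inj_on_diff)
    have below_other: "{z\<in>T. r z < r y} = {z\<in>?T. r z < r y}" if "y \<in> ?T" for y
      using top[OF that] by auto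
    have below_top: "{z\<in>T. r z < r m} = ?T"
      using top by auto
    have "(\<Sum>y\<in>T. (-1::'b) ^ card {z\<in>T. r z < r y})
        = (-1) ^ card {z\<in>T. r z < r m} + (\<Sum>y\<in>?T. (-1::'b) ^ card {z\<in>T. r z < r y})"
      using m(1) less.prems(1) by (simp add: sum.remove)
    also have "\<dots> = (-1) ^ card ?T + (\<Sum>y\<in>?T. (-1::'b) ^ card {z\<in>?T. r z < r y})"
      using below_other below_top by simp
    also have "\<dots> = (if even (card T) then 0 else 1)"
      using IH m(1) less.prems(1) False by (cases "card T") (auto simp: card_Diff_singleton)
    finally show ?thesis .
  qed simp
qed

section \<open>Perfect matchings\<close>

lemma perfect_matching_pair:
  "M \<in> perfect_matchings S \<Longrightarrow> p \<in> M \<Longrightarrow> \<exists>a b. a \<in> S \<and> b \<in> S \<and> a \<noteq> b \<and> p = {a, b}"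
  unfolding perfect_matchings_def by blast

lemma perfect_matching_disjoint:
  "M \<in> perfect_matchings S \<Longrightarrow> p \<in> M \<Longrightarrow> q \<in> M \<Longrightarrow> p \<noteq> q \<Longrightarrow> p \<inter> q = {}"
  unfolding perfect_matchings_def by blast

lemma perfect_matching_Union: "M \<in> perfect_matchings S \<Longrightarrow> \<Union>M = S"
  unfolding perfect_matchings_def by blast

lemma finite_perfect_matching: "finite S \<Longrightarrow> M \<in> perfect_matchings S \<Longrightarrow> finite M"
  using perfect_matching_Union by (metis finite_UnionD)

lemma finite_perfect_matchings: "finite S \<Longrightarrow> finite (perfect_matchings S)"
proof -
  assume "finite S"
  moreover have "perfect_matchings S \<subseteq> Pow (Pow S)"
    unfolding perfect_matchings_def by auto
  ultimately show ?thesis by (meson finite_Pow_iff finite_subset)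
qed

lemma perfect_matching_remove_pair:
  assumes M: "M \<in> perfect_matchings S" and xy: "{x,y} \<in> M"
  shows "M - {{x,y}} \<in> perfect_matchings (S-{x,y})"
  unfolding perfect_matchings_def
proof (intro CollectI conjI)
  show "\<forall>q\<in>M - {{x,y}}. \<exists>a b. a \<in> S - {x,y} \<and> b \<in> S - {x,y} \<and> a \<noteq> b \<and> q = {a,b}"
  proof
    fix q assume q: "q \<in> M - {{x,y}}"
    then have "q \<inter> {x,y} = {}" using perfect_matching_disjoint[OF M] xy by blast
    then show "\<exists>a b. a \<in> S - {x,y} \<and> b \<in> S - {x,y} \<and> a \<noteq> b \<and> q = {a,b}"
      using perfect_matching_pair[OF M, of q] q by auto
  qed
  show "\<forall>q\<in>M - {{x,y}}. \<forall>q'\<in>M - {{x,y}}. q \<noteq> q' \<longrightarrow> q \<inter> q' = {}"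
    using perfect_matching_disjoint[OF M] by blast
  show "\<Union>(M - {{x,y}}) = S - {x,y}"
    using perfect_matching_disjoint[OF M] perfect_matching_Union[OF M] xy by blast
qed

lemma perfect_matching_insert_pair:
  assumes M: "M \<in> perfect_matchings (S-{x,y})" and "x \<in> S" "y \<in> S" "x \<noteq> y"
  shows "insert {x,y} M \<in> perfect_matchings S"
  unfolding perfect_matchings_def
proof (intro CollectI conjI)
  show "\<forall>p\<in>insert {x,y} M. \<exists>a b. a \<in> S \<and> b \<in> S \<and> a \<noteq> b \<and> p = {a,b}"
    using perfect_matching_pair[OF M] assms(2-4) by blast
  show "\<forall>p\<in>insert {x,y} M. \<forall>q\<in>insert {x,y} M. p \<noteq> q \<longrightarrow> p \<inter> q = {}"
    using perfect_matching_disjoint[OF M] perfect_matching_Union[OF M] by blast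
  show "\<Union>(insert {x,y} M) = S" using perfect_matching_Union[OF M] assms(2,3) by blast
qed

lemma perfect_matchings_by_partner:
  assumes "x \<in> S"
  shows "perfect_matchings S = (\<Union>y\<in>S-{x}. insert {x,y} ` perfect_matchings (S-{x,y}))"
proof
  show "perfect_matchings S \<subseteq> (\<Union>y\<in>S-{x}. insert {x,y} ` perfect_matchings (S-{x,y}))"
  proof
    fix M assume M: "M \<in> perfect_matchings S"
    then obtain p where p: "p \<in> M" "x \<in> p" using perfect_matching_Union assms by blast
    then obtain y where y: "p = {x,y}" "y \<in> S" "y \<noteq> x"
      using perfect_matching_pair[OF M p(1)] by blast
    have "M = insert {x,y} (M - {{x,y}})" using p y by blast
    moreover have "M - {{x,y}} \<in> perfect_matchings (S-{x,y})"
      using perfect_matching_remove_pair[OF M] p y(1) by simp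
    ultimately show "M \<in> (\<Union>y\<in>S-{x}. insert {x,y} ` perfect_matchings (S-{x,y}))"
      using y(2,3) by blast
  qed
  show "(\<Union>y\<in>S-{x}. insert {x,y} ` perfect_matchings (S-{x,y})) \<subseteq> perfect_matchings S"
    using perfect_matching_insert_pair[OF _ assms] by auto
qed

lemma sum_perfect_matchings_by_partner:
  assumes "finite S" "x \<in> S"
  shows "(\<Sum>M\<in>perfect_matchings S. f M)
       = (\<Sum>y\<in>S-{x}. \<Sum>M\<in>perfect_matchings (S-{x,y}). f (insert {x,y} M))"
proof -
  have disjoint: "insert {x,y} ` perfect_matchings (S-{x,y}) \<inter> insert {x,y'} ` perfect_matchings (S-{x,y'}) = {}"
    if "y \<noteq> y'" for y y'
  proof (rule ccontr)
    assume "\<not> ?thesis"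
    then obtain M M' where M: "M' \<in> perfect_matchings (S-{x,y'})" "insert {x,y} M = insert {x,y'} M'"
      by blast
    then have "{x,y} \<in> M'" using \<open>y \<noteq> y'\<close> by (metis doubleton_eq_iff insertE insertI1)
    then show False using perfect_matching_Union[OF M(1)] by blast
  qed
  have inj: "inj_on (insert {x,y}) (perfect_matchings (S-{x,y}))" for y
  proof (rule inj_onI)
    fix M M' assume M: "M \<in> perfect_matchings (S-{x,y})" "M' \<in> perfect_matchings (S-{x,y})"
      and eq: "insert {x,y} M = insert {x,y} M'"
    have "{x,y} \<notin> M" "{x,y} \<notin> M'"
      using perfect_matching_Union[OF M(1)] perfect_matching_Union[OF M(2)] by blast+
    then show "M = M'" using eq by (metis insert_ident)
  qed
  have "(\<Sum>M\<in>perfect_matchings S. f M)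
      = (\<Sum>y\<in>S-{x}. \<Sum>M\<in>insert {x,y} ` perfect_matchings (S-{x,y}). f M)"
    unfolding perfect_matchings_by_partner[OF assms(2)]
    using assms(1) disjoint by (intro sum.UNION_disjoint) (auto simp: finite_perfect_matchings)
  also have "\<dots> = (\<Sum>y\<in>S-{x}. \<Sum>M\<in>perfect_matchings (S-{x,y}). f (insert {x,y} M))"
    by (simp add: sum.reindex[OF inj])
  finally show ?thesis .
qed

lemma perfect_matching_parity:
  assumes "finite S" "M \<in> perfect_matchings S" "B \<subseteq> S"
  shows "(-1::'b::comm_ring_1) ^ card B = (-1) ^ card {q\<in>M. card (q \<inter> B) = 1}"
proof -
  have fin: "finite M" using finite_perfect_matching assms by blast
  have "B = (\<Union>q\<in>M. q \<inter> B)" using perfect_matching_Union[OF assms(2)] assms(3) by blast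
  moreover have "card (\<Union>q\<in>M. q \<inter> B) = (\<Sum>q\<in>M. card (q \<inter> B))"
  proof (rule card_UN_disjoint[OF fin])
    show "\<forall>q\<in>M. finite (q \<inter> B)" using perfect_matching_pair[OF assms(2)] by fastforce
    show "\<forall>q\<in>M. \<forall>q'\<in>M. q \<noteq> q' \<longrightarrow> q \<inter> B \<inter> (q' \<inter> B) = {}"
      using perfect_matching_disjoint[OF assms(2)] by blast
  qed
  ultimately have "card B = (\<Sum>q\<in>M. card (q \<inter> B))" by simp
  then have "(-1::'b) ^ card B = (\<Prod>q\<in>M. (-1) ^ card (q \<inter> B))" by (simp add: power_sum)
  also have "\<dots> = (\<Prod>q\<in>M. if card (q \<inter> B) = 1 then -1 else 1)"
  proof (rule prod.cong[OF refl])
    fix q assume "q \<in> M"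
    then obtain a b where "a \<noteq> b" "q = {a,b}" using perfect_matching_pair[OF assms(2)] by blast
    then have "card (q \<inter> B) \<in> {0,1,2}" by (cases "a \<in> B"; cases "b \<in> B") auto
    then show "(-1::'b) ^ card (q \<inter> B) = (if card (q \<inter> B) = 1 then -1 else 1)" by auto
  qed
  also have "\<dots> = (-1) ^ card {q\<in>M. card (q \<inter> B) = 1}"
    using fin by (simp add: prod.If_cases Collect_conj_eq Int_commute)
  finally show ?thesis .
qed

lemma prod_perfect_matching:
  assumes "M \<in> perfect_matchings S"
  shows "(\<Prod>p\<in>M. \<Prod>e\<in>p. f e) = (\<Prod>e\<in>S. f e)"
proof -
  have "prod f (\<Union>M) = (prod \<circ> prod) f M"
    using perfect_matching_pair[OF assms] perfect_matching_disjoint[OF assms]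
    by (intro prod.Union_disjoint) fastforce+
  then show ?thesis using perfect_matching_Union[OF assms] by simp
qed

section \<open>Crossings with respect to a ranking\<close>

definition crosses_rank :: "('a \<Rightarrow> nat) \<Rightarrow> 'a set \<Rightarrow> 'a set \<Rightarrow> bool" where
  "crosses_rank r p q \<longleftrightarrow>
     (\<exists>a b c d. p = {a,c} \<and> q = {b,d} \<and> r a < r b \<and> r b < r c \<and> r c < r d)"

definition crossing_pairs :: "('a \<Rightarrow> nat) \<Rightarrow> 'a set set \<Rightarrow> 'a set set set" where
  "crossing_pairs r M = {{p,q} | p q. p \<in> M \<and> q \<in> M \<and> crosses_rank r p q}"

lemma not_crosses_rank_self: "\<not> crosses_rank r p p"
  unfolding crosses_rank_def by (auto simp: doubleton_eq_iff)

lemma card_crossing_pairs_insert: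
  assumes "finite M" "P \<notin> M" "\<And>q. q \<in> M \<Longrightarrow> \<not> crosses_rank r q P"
  shows "card (crossing_pairs r (insert P M))
       = card (crossing_pairs r M) + card {q\<in>M. crosses_rank r P q}"
proof -
  have split: "crossing_pairs r (insert P M)
      = crossing_pairs r M \<union> (\<lambda>q. {P,q}) ` {q\<in>M. crosses_rank r P q}"
  proof
    show "crossing_pairs r (insert P M)
        \<subseteq> crossing_pairs r M \<union> (\<lambda>q. {P,q}) ` {q\<in>M. crosses_rank r P q}"
    proof
      fix s assume "s \<in> crossing_pairs r (insert P M)"
      then obtain p q where s: "s = {p,q}" "p \<in> insert P M" "q \<in> insert P M" "crosses_rank r p q"
        unfolding crossing_pairs_def by blast
      then have "p = P \<and> q \<in> M \<or> p \<in> M \<and> q \<in> M"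
        using assms(3) not_crosses_rank_self by blast
      then show "s \<in> crossing_pairs r M \<union> (\<lambda>q. {P,q}) ` {q\<in>M. crosses_rank r P q}"
        using s unfolding crossing_pairs_def by blast
    qed
  qed (auto simp: crossing_pairs_def)
  have "crossing_pairs r M \<subseteq> Pow M" unfolding crossing_pairs_def by auto
  then have "finite (crossing_pairs r M)" using assms(1) by (meson finite_Pow_iff finite_subset)
  moreover have "crossing_pairs r M \<inter> (\<lambda>q. {P,q}) ` {q\<in>M. crosses_rank r P q} = {}"
    unfolding crossing_pairs_def using assms(2) by (auto simp: doubleton_eq_iff)
  moreover have "inj_on (\<lambda>q. {P,q}) {q\<in>M. crosses_rank r P q}"
    using assms(2) by (auto simp: inj_on_def doubleton_eq_iff)
  ultimately show ?thesis
    unfolding split using assms(1) by (simp add: card_Un_disjoint card_image)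
qed

lemma min_pair_not_crossed:
  assumes "\<And>z. z \<in> q \<Longrightarrow> r x \<le> r z" "r x < r y"
  shows "\<not> crosses_rank r q {x,y}"
  using assms unfolding crosses_rank_def by (force simp: doubleton_eq_iff)

lemma min_pair_crosses_iff:
  assumes "r x < r b" "r x < r d" "r b \<noteq> r y" "r d \<noteq> r y" "r x < r y"
  shows "crosses_rank r {x,y} {b,d} \<longleftrightarrow> (r b < r y) \<noteq> (r d < r y)"
proof
  assume "crosses_rank r {x,y} {b,d}"
  then obtain a b' c d' where h: "{x,y} = {a,c}" "{b,d} = {b',d'}"
      "r a < r b'" "r b' < r c" "r c < r d'"
    unfolding crosses_rank_def by blast
  then have "a = x \<and> c = y" using assms(5) by (auto simp: doubleton_eq_iff)
  then show "(r b < r y) \<noteq> (r d < r y)" using h by (auto simp: doubleton_eq_iff)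
next
  assume "(r b < r y) \<noteq> (r d < r y)"
  then have "(r b < r y \<and> r y < r d) \<or> (r d < r y \<and> r y < r b)" using assms(3,4) by linarith
  then show "crosses_rank r {x,y} {b,d}"
    unfolding crosses_rank_def using assms(1,2)
    by (metis insert_commute)
qed

lemma sign_insert_min_pair:
  assumes "finite S" "inj_on r S" "x \<in> S" "\<And>z. z \<in> S \<Longrightarrow> r x \<le> r z"
    and "y \<in> S" "y \<noteq> x" and M: "M \<in> perfect_matchings (S-{x,y})"
  shows "(-1::'b::comm_ring_1) ^ card (crossing_pairs r (insert {x,y} M))
       = (-1) ^ card {z\<in>S-{x,y}. r z < r y} * (-1) ^ card (crossing_pairs r M)"
proof -
  define B where "B = {z\<in>S-{x,y}. r z < r y}"
  have strict: "r x < r z" if "z \<in> S" "z \<noteq> x" for z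
    using assms(4)[OF that(1)] inj_onD[OF assms(2) _ assms(3) that(1)] that(2) by fastforce
  have ry: "r z \<noteq> r y" if "z \<in> S - {x,y}" for z
    using inj_onD[OF assms(2) _ _ assms(5)] that by blast
  have crosses_iff: "crosses_rank r {x,y} q \<longleftrightarrow> card (q \<inter> B) = 1" if q: "q \<in> M" for q
  proof -
    obtain b d where bd: "b \<in> S-{x,y}" "d \<in> S-{x,y}" "b \<noteq> d" "q = {b,d}"
      using perfect_matching_pair[OF M q] by blast
    have "crosses_rank r {x,y} q \<longleftrightarrow> (r b < r y) \<noteq> (r d < r y)"
      unfolding bd(4) using bd assms(5,6) by (intro min_pair_crosses_iff strict ry) auto
    also have "\<dots> \<longleftrightarrow> (b \<in> B) \<noteq> (d \<in> B)"
      using bd(1,2) unfolding B_def by blast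
    also have "\<dots> \<longleftrightarrow> card (q \<inter> B) = 1"
      using bd(3,4) by (cases "b \<in> B"; cases "d \<in> B") auto
    finally show ?thesis .
  qed
  have "card (crossing_pairs r (insert {x,y} M))
      = card (crossing_pairs r M) + card {q\<in>M. crosses_rank r {x,y} q}"
  proof (rule card_crossing_pairs_insert)
    show "finite M" using finite_perfect_matching assms(1) M by blast
    show "{x,y} \<notin> M" using perfect_matching_Union[OF M] by blast
    show "\<not> crosses_rank r q {x,y}" if "q \<in> M" for q
      using perfect_matching_Union[OF M] that strict assms(4,5,6)
      by (intro min_pair_not_crossed) blast+
  qed
  moreover have "{q\<in>M. crosses_rank r {x,y} q} = {q\<in>M. card (q \<inter> B) = 1}"
    using crosses_iff by blast
  moreover have "(-1::'b) ^ card B = (-1) ^ card {q\<in>M. card (q \<inter> B) = 1}"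
    using assms(1) M by (intro perfect_matching_parity) (auto simp: B_def)
  ultimately show ?thesis by (simp add: power_add B_def)
qed

lemma signed_crossing_sum:
  assumes "finite S" "inj_on r S" "even (card S)"
  shows "(\<Sum>M\<in>perfect_matchings S. (-1::'b::comm_ring_1) ^ card (crossing_pairs r M)) = 1"
  using assms
proof (induction "card S" arbitrary: S rule: less_induct)
  case less
  show ?case
  proof (cases "S = {}")
    case True
    then have "perfect_matchings S = {{}}" unfolding perfect_matchings_def by auto
    then show ?thesis by (simp add: crossing_pairs_def)
  next
    case False
    obtain x where x: "x \<in> S" "r x = Min (r ` S)"
      using False less.prems by (metis (mono_tags, lifting) Min_in finite_imageI image_iff image_is_empty)
    have min: "r x \<le> r z" if "z \<in> S" for z
      using x(2) less.prems(1) that by (simp add: Min_le)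
    have partner_sum: "(\<Sum>M\<in>perfect_matchings (S-{x,y}).
          (-1::'b) ^ card (crossing_pairs r (insert {x,y} M)))
        = (-1) ^ card {z\<in>S-{x}. r z < r y}" if y: "y \<in> S-{x}" for y
    proof -
      have smaller: "card (S-{x,y}) < card S"
        using x(1) y less.prems(1) by (metis Diff_insert2 card_Diff2_less DiffD1)
      have "even (card (S-{x,y}))" using x(1) y less.prems by (auto simp: card_Diff_subset)
      then have IH: "(\<Sum>M\<in>perfect_matchings (S-{x,y}). (-1::'b) ^ card (crossing_pairs r M)) = 1"
        using less.hyps[OF smaller] less.prems(1,2) inj_on_diff by blast
      have below: "{z\<in>S-{x,y}. r z < r y} = {z\<in>S-{x}. r z < r y}" by auto
      have "(\<Sum>M\<in>perfect_matchings (S-{x,y}). (-1::'b) ^ card (crossing_pairs r (insert {x,y} M)))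
          = (\<Sum>M\<in>perfect_matchings (S-{x,y}).
              (-1) ^ card {z\<in>S-{x,y}. r z < r y} * (-1) ^ card (crossing_pairs r M))"
        using sign_insert_min_pair[OF less.prems(1,2) x(1) min] y by (intro sum.cong) auto
      also have "\<dots> = (-1) ^ card {z\<in>S-{x}. r z < r y}"
        using IH by (simp only: sum_distrib_left[symmetric] mult_1_right below)
      finally show ?thesis .
    qed
    have "(\<Sum>M\<in>perfect_matchings S. (-1::'b) ^ card (crossing_pairs r M))
        = (\<Sum>y\<in>S-{x}. (-1) ^ card {z\<in>S-{x}. r z < r y})"
      unfolding sum_perfect_matchings_by_partner[OF less.prems(1) x(1)]
      using partner_sum by (rule sum.cong[OF refl])
    also have "\<dots> = 1"
      using alternating_rank_sum[of "S-{x}" r] less.prems x(1) False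
      by (simp add: inj_on_diff card_Diff_singleton)
    finally show ?thesis .
  qed
qed

section \<open>Crossings in a cyclic list\<close>

definition position :: "'a list \<Rightarrow> 'a \<Rightarrow> nat" where
  "position xs a = (THE i. i < length xs \<and> xs ! i = a)"

lemma position_nth: "distinct xs \<Longrightarrow> i < length xs \<Longrightarrow> position xs (xs ! i) = i"
  unfolding position_def by (rule the_equality) (auto simp: nth_eq_iff_index_eq)

lemma position_in: "distinct xs \<Longrightarrow> a \<in> set xs \<Longrightarrow> position xs a < length xs \<and> xs ! position xs a = a"
  by (metis position_nth in_set_conv_nth)

lemma crosses_iff_crosses_rank:
  assumes "distinct xs" "p \<subseteq> set xs" "q \<subseteq> set xs"
  shows "crosses xs p q \<longleftrightarrow> crosses_rank (position xs) p q"
proof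
  assume "crosses xs p q"
  then obtain i j k l where h: "i < j" "j < k" "k < l" "l < length xs"
      "p = {xs ! i, xs ! k}" "q = {xs ! j, xs ! l}" unfolding crosses_def by blast
  then show "crosses_rank (position xs) p q"
    unfolding crosses_rank_def using assms(1)
    by (intro exI[of _ "xs!i"] exI[of _ "xs!j"] exI[of _ "xs!k"] exI[of _ "xs!l"])
      (simp add: position_nth)
next
  assume "crosses_rank (position xs) p q"
  then obtain a b c d where h: "p = {a,c}" "q = {b,d}" "position xs a < position xs b"
      "position xs b < position xs c" "position xs c < position xs d"
    unfolding crosses_rank_def by blast
  then have "a \<in> set xs" "b \<in> set xs" "c \<in> set xs" "d \<in> set xs" using assms by auto
  then show "crosses xs p q"
    unfolding crosses_def using h position_in[OF assms(1)]
    by (intro exI[of _ "position xs a"] exI[of _ "position xs b"]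
        exI[of _ "position xs c"] exI[of _ "position xs d"]) simp
qed

lemma signed_matching_sum:
  assumes "distinct xs" "even (length xs)"
  shows "(\<Sum>M\<in>perfect_matchings (set xs). (-1::'b::comm_ring_1) ^ cr xs M) = 1"
proof -
  have "cr xs M = card (crossing_pairs (position xs) M)"
    if M: "M \<in> perfect_matchings (set xs)" for M
  proof -
    have "\<And>p. p \<in> M \<Longrightarrow> p \<subseteq> set xs" using perfect_matching_Union[OF M] by blast
    then have "\<And>p q. (p \<in> M \<and> q \<in> M \<and> crosses xs p q)
        = (p \<in> M \<and> q \<in> M \<and> crosses_rank (position xs) p q)"
      using crosses_iff_crosses_rank[OF assms(1)] by blast
    then show ?thesis unfolding cr_def crossing_pairs_def by (simp only:)
  qed
  moreover have "inj_on (position xs) (set xs)" by (metis assms(1) position_in inj_onI)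
  ultimately show ?thesis
    using signed_crossing_sum[of "set xs" "position xs"] assms by (simp add: distinct_card)
qed

section \<open>The graph identity\<close>

lemma vertex_factor:
  assumes "distinct xs" "even (length xs)"
  shows "(\<Sum>M\<in>perfect_matchings (set xs). (-1::'b::comm_ring_1) ^ cr xs M * (\<Prod>p\<in>M. \<Prod>e\<in>p. f e))
       = (\<Prod>e\<in>set xs. f e)"
proof -
  have "(\<Sum>M\<in>perfect_matchings (set xs). (-1::'b) ^ cr xs M * (\<Prod>p\<in>M. \<Prod>e\<in>p. f e))
      = (\<Sum>M\<in>perfect_matchings (set xs). (-1) ^ cr xs M) * (\<Prod>e\<in>set xs. f e)"
    by (simp add: prod_perfect_matching sum_distrib_right)
  also have "\<dots> = (\<Prod>e\<in>set xs. f e)"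
    by (simp only: signed_matching_sum[OF assms] mult_1_left)
  finally show ?thesis .
qed

text \<open>Each edge of a simple graph is incident to exactly two vertices.\<close>
lemma prod_incident_edges:
  assumes "simple_graph V E"
  shows "(\<Prod>v\<in>V. \<Prod>e\<in>incident E v. f e) = (\<Prod>e\<in>E. f e ^ 2)"
proof -
  have fV: "finite V" using assms unfolding simple_graph_def by blast
  have "E \<subseteq> Pow V" using assms unfolding simple_graph_def by auto
  then have fE: "finite E" using fV by (meson finite_Pow_iff finite_subset)
  have "(\<Prod>v\<in>V. \<Prod>e\<in>incident E v. f e) = (\<Prod>e\<in>E. \<Prod>v\<in>{v. v \<in> V \<and> v \<in> e}. f e)"
    unfolding incident_def by (rule prod.swap_restrict[OF fV fE])
  also have "\<dots> = (\<Prod>e\<in>E. f e ^ 2)"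
  proof (rule prod.cong[OF refl])
    fix e assume "e \<in> E"
    then obtain a b where "a \<in> V" "b \<in> V" "a \<noteq> b" "e = {a,b}"
      using assms unfolding simple_graph_def by blast
    then have "{v. v \<in> V \<and> v \<in> e} = {a,b}" by auto
    with \<open>a \<noteq> b\<close> show "(\<Prod>v\<in>{v. v \<in> V \<and> v \<in> e}. f e) = f e ^ 2"
      by (simp add: power2_eq_square)
  qed
  finally show ?thesis .
qed

theorem mainTheorem6:
  fixes V :: "'v set" and E :: "'v set set" and rot :: "'v \<Rightarrow> 'v set list"
    and K sqrtK :: "'v set \<Rightarrow> 'a :: comm_ring_1"
  assumes "simple_graph V E"
    and "even_graph V E"
    and "rotation_system V E rot"
    and "\<And>e. e \<in> E \<Longrightarrow> sqrtK e ^ 2 = K e"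
  shows "(\<Prod>e\<in>E. K e) =
    (\<Sum>Ms \<in> PiE V (\<lambda>v. perfect_matchings (incident E v)).
       \<Prod>v\<in>V. (-1) ^ cr (rot v) (Ms v) * (\<Prod>p\<in>Ms v. \<Prod>e\<in>p. sqrtK e))"
proof -
  have fV: "finite V" using assms(1) unfolding simple_graph_def by blast
  have rot: "distinct (rot v)" "set (rot v) = incident E v" "even (length (rot v))"
    if "v \<in> V" for v
    using assms(2,3) that distinct_card[of "rot v"]
    unfolding rotation_system_def even_graph_def by auto
  have "(\<Sum>Ms \<in> PiE V (\<lambda>v. perfect_matchings (incident E v)).
          \<Prod>v\<in>V. (-1) ^ cr (rot v) (Ms v) * (\<Prod>p\<in>Ms v. \<Prod>e\<in>p. sqrtK e))
      = (\<Prod>v\<in>V. \<Sum>M\<in>perfect_matchings (incident E v).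
          (-1) ^ cr (rot v) M * (\<Prod>p\<in>M. \<Prod>e\<in>p. sqrtK e))"
    using fV rot(2) by (intro prod_sum_PiE[symmetric]) (metis finite_perfect_matchings finite_set)+
  also have "\<dots> = (\<Prod>v\<in>V. \<Prod>e\<in>incident E v. sqrtK e)"
  proof (rule prod.cong[OF refl])
    fix v assume "v \<in> V"
    from vertex_factor[OF rot(1,3)[OF this], of sqrtK] rot(2)[OF this]
    show "(\<Sum>M\<in>perfect_matchings (incident E v). (-1) ^ cr (rot v) M * (\<Prod>p\<in>M. \<Prod>e\<in>p. sqrtK e))
        = (\<Prod>e\<in>incident E v. sqrtK e)" by simp
  qed
  also have "\<dots> = (\<Prod>e\<in>E. sqrtK e ^ 2)"
    by (rule prod_incident_edges[OF assms(1)])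
  also have "\<dots> = (\<Prod>e\<in>E. K e)"
    using assms(4) by (rule prod.cong[OF refl])
  finally show ?thesis by (rule sym)
qed

end
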